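(* For every $g\ge 1$, the orientation $\mathcal{H}_g^e$ is a Pfaffian orientation of $\mathcal{H}_g$; that is, every nice cycle of $\mathcal{H}_g$ is oddly oriented relative to $\mathcal{H}_g^e$.
   Context: The graphs $\mathcal{H}_g$ with four hub vertices $v_1,v_2,v_3,v_4$ and orientations $\mathcal{H}_g^e$ are defined recursively. $\mathcal{H}_1$ is the 4-cycle with edges $\{v_1,v_2\},\{v_1,v_3\},\{v_2,v_4\},\{v_3,v_4\}$, and $\mathcal{H}_1^e$ orients them as $v_1\to v_2$, $v_1\to v_3$, $v_4\to v_2$, $v_3\to v_4$. For $g>1$, take four disjoint copies $\mathcal{H}_{g-1}^{(i)}$, $i=1,2,3,4$, of $\mathcal{H}_{g-1}$, each oriented as a copy of $\mathcal{H}_{g-1}^e$, with hubs $v_k^{(i)}$ corresponding to $v_k$; identify $v_1^{(1)}$ and $v_1^{(4)}$ as the hub $v_1$ of $\mathcal{H}_g$, $v_2^{(2)}$ and $v_1^{(3)}$ as $v_4$, $v_2^{(1)}$ and $v_1^{(2)}$ as $v_3$, and $v_2^{(3)}$ and $v_2^{(4)}$ as $v_2$; $\mathcal{H}_g^e$ is the union of the orientations of the four copies. (Equivalently, $\mathcal{H}_g$ arises from $\mathcal{H}_{g-1}$ by keeping each edge $\{u,v\}$ and adding two new adjacent vertices $w,w'$ with $w$ adjacent to $u$ and $w'$ adjacent to $v$.) All cycles are elementary. A cycle $C$ of a graph $G$ is nice if the subgraph of $G$ induced by the vertices not on $C$ has a perfect matching. An even cycle is oddly oriented if, traversing it in either direction,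 an odd number of its edges are oriented in the direction of traversal. An orientation is Pfaffian if every nice cycle is oddly oriented. *)

theory Defs
  imports Main
begin

(* Vertices: Hub k (k = 1..4) are the hubs of H_g; Inner i v is the vertex v of the
   i-th copy of H_(g-1) (for those vertices of the copy that are not identified
   with a hub of H_g). *)
datatype vtx = Hub nat | Inner nat vtx

(* embedding of copy i of H_(g-1) into H_g, realising the hub identifications *)
fun emb :: "nat \<Rightarrow> vtx \<Rightarrow> vtx" where
  "emb i (Hub k) =
     (if i = 1 \<and> k = 1 then Hub 1
      else if i = 4 \<and> k = 1 then Hub 1
      else if i = 2 \<and> k = 2 then Hub 4
      else if i = 3 \<and> k = 1 then Hub 4
      else if i = 1 \<and> k = 2 then Hub 3
      else if i = 2 \<and> k = 1 then Hub 3
      else if i = 3 \<and> k = 2 then Hub 2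
      else if i = 4 \<and> k = 2 then Hub 2
      else Inner i (Hub k))"
| "emb i (Inner j w) = Inner i (Inner j w)"

(* the orientation H_g^e as a set of arcs (u,v) meaning u \<rightarrow> v; H_0 is unused *)
fun arcs :: "nat \<Rightarrow> (vtx \<times> vtx) set" where
  "arcs 0 = {}"
| "arcs (Suc 0) = {(Hub 1, Hub 2), (Hub 1, Hub 3), (Hub 4, Hub 2), (Hub 3, Hub 4)}"
| "arcs (Suc (Suc n)) =
     (\<Union>i\<in>{1,2,3,4::nat}. (\<lambda>(a, b). (emb i a, emb i b)) ` arcs (Suc n))"

definition verts :: "nat \<Rightarrow> vtx set" where
  "verts g = fst ` arcs g \<union> snd ` arcs g"

definition adj :: "nat \<Rightarrow> vtx \<Rightarrow> vtx \<Rightarrow> bool" where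
  "adj g u v \<longleftrightarrow> (u, v) \<in> arcs g \<or> (v, u) \<in> arcs g"

definition is_cycle :: "nat \<Rightarrow> vtx list \<Rightarrow> bool" where
  "is_cycle g c \<longleftrightarrow> length c \<ge> 3 \<and> distinct c \<and> set c \<subseteq> verts g \<and>
     (\<forall>i < length c. adj g (c ! i) (c ! ((i + 1) mod length c)))"

definition has_perfect_matching :: "nat \<Rightarrow> vtx set \<Rightarrow> bool" where
  "has_perfect_matching g S \<longleftrightarrow>
     (\<exists>M. M \<subseteq> {{u, v} | u v. adj g u v \<and> u \<in> S \<and> v \<in> S} \<and>
          (\<forall>x\<in>S. \<exists>!e. e \<in> M \<and> x \<in> e))"

definition nice_cycle :: "nat \<Rightarrow> vtx list \<Rightarrow> bool" where
  "nice_cycle g c \<longleftrightarrow> is_cycle g c \<and> has_perfect_matching g (verts g - set c)"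

definition fwd_count :: "nat \<Rightarrow> vtx list \<Rightarrow> nat" where
  "fwd_count g c = card {i. i < length c \<and> (c ! i, c ! ((i + 1) mod length c)) \<in> arcs g}"

definition bwd_count :: "nat \<Rightarrow> vtx list \<Rightarrow> nat" where
  "bwd_count g c = card {i. i < length c \<and> (c ! ((i + 1) mod length c), c ! i) \<in> arcs g}"

definition oddly_oriented :: "nat \<Rightarrow> vtx list \<Rightarrow> bool" where
  "oddly_oriented g c \<longleftrightarrow> even (length c) \<and> odd (fwd_count g c) \<and> odd (bwd_count g c)"

definition pfaffian :: "nat \<Rightarrow> bool" where
  "pfaffian g \<longleftrightarrow> (\<forall>c. nice_cycle g c \<longrightarrow> oddly_oriented g c)"

end

theory Submission
  imports Defs
begin

(*
  H_g^e arises from the single arc Hub 1 \<rightarrow> Hub 2 by gluing g times: the i-th copy is placed on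
  an arc of the 4-cycle H_1, its Hub 1 and Hub 2 at the tail and the head of that arc. By
  induction on g we prove two invariants: every path from Hub 1 to Hub 2 has odd length, an odd
  number of forward and an even number of backward arcs, just like the single arc; and every
  cycle is oddly oriented.

  A walk of the glued graph between two hubs splits into segments, each inside one copy and
  joining its Hub 1 and Hub 2. By the path invariant of the copy, contracting every segment to
  the corresponding arc of H_1 preserves the parities of the length and of both orientation
  counts. Hence paths, and cycles meeting two copies, reduce to the 4-cycle H_1, which is checked
  by enumeration; a cycle inside a single copy is covered by the cycle invariant of that copy.
*)

section \<open>Walks and orientation parities\<close>

lemma distinct_hd_ne_last: "distinct xs \<Longrightarrow> 2 \<le> length xs \<Longrightarrow> hd xs \<noteq> last xs"
  by (cases xs rule: remdups_adj.cases) auto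

lemma two_le_length_if_hd_ne_last: "p \<noteq> [] \<Longrightarrow> hd p \<noteq> last p \<Longrightarrow> 2 \<le> length p"
  by (cases p rule: remdups_adj.cases) auto

lemma last_filter: "P (last p) \<Longrightarrow> p \<noteq> [] \<Longrightarrow> last (filter P p) = last p"
  by (induction p) (auto simp: filter_empty_conv)

lemma last_append_tl: "t \<noteq> [] \<Longrightarrow> last s = hd t \<Longrightarrow> last (s @ tl t) = last t"
  by (cases t) auto

lemma distinct_append_tl:
  "s \<noteq> [] \<Longrightarrow> t \<noteq> [] \<Longrightarrow> last s = hd t \<Longrightarrow> distinct (s @ tl t) \<Longrightarrow> distinct s \<and> distinct t"
  using last_in_set[of s] by (cases t) auto

definition path_edges :: "'a list \<Rightarrow> ('a \<times> 'a) list" where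
  "path_edges p = zip p (tl p)"

definition cycle_edges :: "'a list \<Rightarrow> ('a \<times> 'a) list" where
  "cycle_edges c = zip c (rotate1 c)"

definition adjacent :: "('a \<times> 'a) set \<Rightarrow> 'a \<Rightarrow> 'a \<Rightarrow> bool" where
  "adjacent X u v \<longleftrightarrow> (u, v) \<in> X \<or> (v, u) \<in> X"

definition walk :: "('a \<times> 'a) set \<Rightarrow> 'a list \<Rightarrow> bool" where
  "walk X p \<longleftrightarrow> (\<forall>(u, v) \<in> set (path_edges p). adjacent X u v)"

definition orientation_parity :: "('a \<times> 'a) set \<Rightarrow> ('a \<times> 'a) list \<Rightarrow> bool \<times> bool \<times> bool" where
  "orientation_parity X E =
     (even (length E), even (length (filter (\<lambda>e. e \<in> X) E)),
      even (length (filter (\<lambda>e. prod.swap e \<in> X) E)))"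

lemma path_edges_simps [simp]:
  "path_edges [] = []" "path_edges [x] = []" "path_edges (x # y # p) = (x, y) # path_edges (y # p)"
  by (simp_all add: path_edges_def)

lemma path_edges_append_tl:
  "s \<noteq> [] \<Longrightarrow> t \<noteq> [] \<Longrightarrow> last s = hd t \<Longrightarrow> path_edges (s @ tl t) = path_edges s @ path_edges t"
proof (induction s rule: induct_list012)
  case (2 x)
  then show ?case by (cases t) (auto simp: path_edges_def)
qed auto

lemma path_edges_snoc: "p \<noteq> [] \<Longrightarrow> path_edges (p @ [y]) = path_edges p @ [(last p, y)]"
  using path_edges_append_tl[of p "[last p, y]"] by simp

lemma path_edges_rev: "path_edges (rev p) = rev (map prod.swap (path_edges p))"
proof (induction p)
  case (Cons x p)
  show ?case
  proof (cases "p = []")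
    case False
    then have "path_edges (rev p @ [x]) = path_edges (rev p) @ [(hd p, x)]"
      by (simp add: path_edges_snoc last_rev)
    with Cons False show ?thesis by (cases p) simp_all
  qed simp
qed simp

lemma path_edges_map: "path_edges (map f p) = map (map_prod f f) (path_edges p)"
  by (induction p rule: induct_list012) auto

lemma path_edges_distinct: "distinct p \<Longrightarrow> \<forall>(u, v) \<in> set (path_edges p). u \<noteq> v"
  by (induction p rule: induct_list012) auto

lemma path_edges_closed_distinct:
  assumes "distinct c" "2 \<le> length c"
  shows "\<forall>(u, v) \<in> set (path_edges (c @ [hd c])). u \<noteq> v"
proof -
  from assms(2) have "c \<noteq> []" by auto
  with assms show ?thesis
    using path_edges_distinct[of c] distinct_hd_ne_last[of c] by (auto simp: path_edges_snoc)
qed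

lemma cycle_edges_eq_path_edges: "c \<noteq> [] \<Longrightarrow> cycle_edges c = path_edges (c @ [hd c])"
proof (cases c)
  case (Cons x p)
  have "zip (x # p @ [x]) (p @ [x]) = zip (x # p) (p @ [x])"
    using zip_append1[of "x # p" "[x]" "p @ [x]"] by simp
  with Cons show ?thesis by (simp add: cycle_edges_def path_edges_def)
qed simp

lemma nth_cycle_edges: "i < length c \<Longrightarrow> cycle_edges c ! i = (c ! i, c ! ((i + 1) mod length c))"
  by (simp add: cycle_edges_def nth_rotate1)

lemma cycle_edges_rotate: "cycle_edges (rotate n c) = rotate n (cycle_edges c)"
proof -
  have zip_rotate1: "rotate1 (zip xs ys) = zip (rotate1 xs) (rotate1 ys)"
    if "length xs = length ys" for xs ys :: "'a list"
    using that by (cases xs; cases ys) auto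
  have "cycle_edges (rotate1 c) = rotate1 (cycle_edges c)" for c :: "'a list"
    by (simp add: cycle_edges_def zip_rotate1)
  then show ?thesis
    by (induction n) simp_all
qed

lemma walk_Cons_Cons [simp]: "walk X (x # y # p) \<longleftrightarrow> adjacent X x y \<and> walk X (y # p)"
  by (simp add: walk_def)

lemma walk_short [simp]: "walk X []" "walk X [x]"
  by (simp_all add: walk_def)

lemma walk_append_tl:
  "s \<noteq> [] \<Longrightarrow> t \<noteq> [] \<Longrightarrow> last s = hd t \<Longrightarrow> walk X (s @ tl t) \<longleftrightarrow> walk X s \<and> walk X t"
  by (auto simp: walk_def path_edges_append_tl)

lemma walk_appendD: "walk X (p @ q) \<Longrightarrow> walk X p \<and> walk X q"
proof (induction p rule: induct_list012)
  case (2 x)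
  then show ?case by (cases q) auto
qed auto

lemma walk_rev: "walk X (rev p) \<longleftrightarrow> walk X p"
  by (auto simp: walk_def path_edges_rev adjacent_def)

lemma walk_closed_iff: "c \<noteq> [] \<Longrightarrow> walk X (c @ [hd c]) \<longleftrightarrow> (\<forall>(u, v) \<in> set (cycle_edges c). adjacent X u v)"
  by (simp add: walk_def cycle_edges_eq_path_edges)

lemma set_walk_subset_Field: "walk X p \<Longrightarrow> 2 \<le> length p \<Longrightarrow> set p \<subseteq> Field X"
proof (induction p rule: induct_list012)
  case (3 x y p)
  then have "x \<in> Field X" "y \<in> Field X"
    by (auto simp: adjacent_def intro: FieldI1 FieldI2)
  with 3 show ?case by (cases p) auto
qed auto

lemma length_walk_le_card_Field:
  assumes "finite X" "distinct p" "walk X p" "2 \<le> length p"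
  shows "length p \<le> card (Field X)"
  using card_mono[OF _ set_walk_subset_Field[OF assms(3,4)]] assms(1,2)
  by (simp add: distinct_card finite_Field)

lemma orientation_parity_append_cong:
  assumes "orientation_parity X E = orientation_parity Y E'"
    and "orientation_parity X F = orientation_parity Y F'"
  shows "orientation_parity X (E @ F) = orientation_parity Y (E' @ F')"
  using assms by (simp add: orientation_parity_def)

lemma orientation_parity_rotate: "orientation_parity X (rotate n E) = orientation_parity X E"
proof -
  have "length (filter P (rotate n E)) = length (filter P E)" for P
    by (metis add.commute append_take_drop_id filter_append length_append rotate_drop_take)
  then show ?thesis by (simp add: orientation_parity_def)
qed

lemma orientation_parity_reverse:
  "orientation_parity X (path_edges (rev p)) =
     (case orientation_parity X (path_edges p) of (l, f, b) \<Rightarrow> (l, b, f))"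
  by (simp add: orientation_parity_def path_edges_rev rev_filter[symmetric] filter_map comp_def)

lemma orientation_parity_single_arc:
  "(a, b) \<in> Y \<Longrightarrow> (b, a) \<notin> Y \<Longrightarrow> orientation_parity Y [(a, b)] = (False, False, True)"
  "(a, b) \<in> Y \<Longrightarrow> (b, a) \<notin> Y \<Longrightarrow> orientation_parity Y [(b, a)] = (False, True, False)"
  by (simp_all add: orientation_parity_def)

definition cycle_in :: "('a \<times> 'a) set \<Rightarrow> 'a list \<Rightarrow> bool" where
  "cycle_in X c \<longleftrightarrow> 3 \<le> length c \<and> distinct c \<and> walk X (c @ [hd c])"

definition all_cycles_odd :: "('a \<times> 'a) set \<Rightarrow> bool" where
  "all_cycles_odd X \<longleftrightarrow>
     (\<forall>c. cycle_in X c \<longrightarrow> orientation_parity X (cycle_edges c) = (True, False, False))"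

lemma cycle_in_rotate: "cycle_in X c \<Longrightarrow> cycle_in X (rotate n c)"
proof -
  assume c: "cycle_in X c"
  then have "c \<noteq> []" "rotate n c \<noteq> []"
    by (auto simp: cycle_in_def)
  with c show ?thesis
    by (simp add: cycle_in_def walk_closed_iff cycle_edges_rotate)
qed

section \<open>Gluing four copies along the hubs\<close>

abbreviation copies :: "nat set" where
  "copies \<equiv> {1, 2, 3, 4}"

definition glue :: "(vtx \<times> vtx) set \<Rightarrow> (vtx \<times> vtx) set" where
  "glue X = (\<Union>i\<in>copies. (\<lambda>(a, b). (emb i a, emb i b)) ` X)"

lemma arcs_one: "arcs 1 = {(Hub 1, Hub 2), (Hub 1, Hub 3), (Hub 4, Hub 2), (Hub 3, Hub 4)}"
  by simp

lemma arcs_eq_glue_power: "1 \<le> g \<Longrightarrow> arcs g = (glue ^^ g) {(Hub 1, Hub 2)}"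
proof (induction g rule: nat_induct_at_least)
  case base
  show ?case by (auto simp: glue_def arcs_one)
next
  case (Suc n)
  then obtain m where "n = Suc m" by (cases n) auto
  with Suc show ?case by (simp add: glue_def)
qed

fun is_hub :: "vtx \<Rightarrow> bool" where
  "is_hub (Hub k) = True"
| "is_hub (Inner i v) = False"

lemma emb_eq_emb_iff [simp]: "emb i a = emb i b \<longleftrightarrow> a = b"
  by (cases a; cases b) (auto split: if_splits)

lemma is_hub_emb: "is_hub (emb i a) \<Longrightarrow> a = Hub 1 \<or> a = Hub 2"
  by (cases a) (auto split: if_splits)

lemma emb_eq_non_hub: "emb j b = emb i a \<Longrightarrow> \<not> is_hub (emb i a) \<Longrightarrow> j = i \<and> b = a"
  by (cases a; cases b) (auto split: if_splits)

lemma emb_common_vertex_unique: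
  assumes "i \<in> copies" "j \<in> copies" "i \<noteq> j"
    and "emb i a = emb j a'" "emb i b = emb j b'"
  shows "a = b"
proof -
  have "is_hub (emb i a)" "is_hub (emb i b)"
    using assms(3-5) emb_eq_non_hub by metis+
  with assms(4,5) have "a \<in> {Hub 1, Hub 2}" "b \<in> {Hub 1, Hub 2}" "a' \<in> {Hub 1, Hub 2}" "b' \<in> {Hub 1, Hub 2}"
    using is_hub_emb by (metis insert_iff)+
  with assms(1-5) show ?thesis by auto
qed

lemma emb_hub_arc:
  assumes "i \<in> copies"
  shows "(emb i (Hub 1), emb i (Hub 2)) \<in> arcs 1" "(emb i (Hub 2), emb i (Hub 1)) \<notin> arcs 1"
  using assms by (auto simp: arcs_one)

lemma adjacent_glueE:
  assumes "adjacent (glue X) x y"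
  obtains i u v where "i \<in> copies" "adjacent X u v" "x = emb i u" "y = emb i v"
  using assms unfolding adjacent_def glue_def by auto

lemma emb_arc_glue_iff:
  assumes "i \<in> copies" "u \<noteq> v"
  shows "(emb i u, emb i v) \<in> glue X \<longleftrightarrow> (u, v) \<in> X"
proof
  assume "(emb i u, emb i v) \<in> glue X"
  then obtain j a b where "j \<in> copies" "(a, b) \<in> X" "emb i u = emb j a" "emb i v = emb j b"
    unfolding glue_def by auto
  with assms emb_common_vertex_unique[of i j u a v b] show "(u, v) \<in> X"
    by (cases "i = j") auto
next
  assume "(u, v) \<in> X"
  with assms(1) show "(emb i u, emb i v) \<in> glue X"
    unfolding glue_def by force
qed

lemma adjacent_emb_glue_iff:
  "i \<in> copies \<Longrightarrow> u \<noteq> v \<Longrightarrow> adjacent (glue X) (emb i u) (emb i v) \<longleftrightarrow> adjacent X u v"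
  by (metis adjacent_def emb_arc_glue_iff)

lemma walk_map_emb_iff:
  "i \<in> copies \<Longrightarrow> \<forall>(u, v) \<in> set (path_edges q). u \<noteq> v \<Longrightarrow>
     walk (glue X) (map (emb i) q) \<longleftrightarrow> walk X q"
  by (induction q rule: induct_list012) (auto simp: adjacent_emb_glue_iff)

lemma orientation_parity_map_emb:
  assumes "i \<in> copies" "\<forall>(u, v) \<in> set E. u \<noteq> v"
  shows "orientation_parity (glue X) (map (map_prod (emb i) (emb i)) E) = orientation_parity X E"
proof -
  have "filter (\<lambda>e. map_prod (emb i) (emb i) e \<in> glue X) E = filter (\<lambda>e. e \<in> X) E"
    "filter (\<lambda>e. prod.swap (map_prod (emb i) (emb i) e) \<in> glue X) E = filter (\<lambda>e. prod.swap e \<in> X) E"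
    using assms by (auto intro!: filter_cong simp: emb_arc_glue_iff)
  then show ?thesis
    by (simp add: orientation_parity_def filter_map comp_def)
qed

lemma orientation_parity_path_map_emb:
  "i \<in> copies \<Longrightarrow> \<forall>(u, v) \<in> set (path_edges q). u \<noteq> v \<Longrightarrow>
     orientation_parity (glue X) (path_edges (map (emb i) q)) = orientation_parity X (path_edges q)"
  by (simp add: orientation_parity_map_emb path_edges_map)

section \<open>The invariants for a single arc and for the 4-cycle\<close>

definition hub_paths_odd :: "(vtx \<times> vtx) set \<Rightarrow> bool" where
  "hub_paths_odd X \<longleftrightarrow>
     (\<forall>p. distinct p \<and> walk X p \<and> p \<noteq> [] \<and> hd p = Hub 1 \<and> last p = Hub 2 \<longrightarrow>
        orientation_parity X (path_edges p) = (False, False, True))"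

lemma hub_paths_oddD:
  "hub_paths_odd X \<Longrightarrow> distinct p \<Longrightarrow> walk X p \<Longrightarrow> p \<noteq> [] \<Longrightarrow> hd p = Hub 1 \<Longrightarrow> last p = Hub 2 \<Longrightarrow>
     orientation_parity X (path_edges p) = (False, False, True)"
  by (simp add: hub_paths_odd_def)

lemma invariants_single_arc:
  "hub_paths_odd {(Hub 1, Hub 2)}" "all_cycles_odd {(Hub 1, Hub 2)}"
proof -
  have short: "length p \<le> 2" if "walk {(Hub 1, Hub 2)} p" "distinct p" for p :: "vtx list"
  proof (cases "2 \<le> length p")
    case True
    then show ?thesis
      using length_walk_le_card_Field[of "{(Hub 1, Hub 2)}" p] that by (simp add: Field_def)
  qed simp
  show "hub_paths_odd {(Hub 1, Hub 2)}"
    unfolding hub_paths_odd_def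
  proof (intro allI impI, elim conjE)
    fix p :: "vtx list"
    assume p: "distinct p" "walk {(Hub 1, Hub 2)} p" "p \<noteq> []" "hd p = Hub 1" "last p = Hub 2"
    then have "2 \<le> length p"
      by (simp add: two_le_length_if_hd_ne_last)
    with short[OF p(2,1)] have "p = [Hub 1, Hub 2]"
      using p(4,5) by (cases p rule: remdups_adj.cases) auto
    then show "orientation_parity {(Hub 1, Hub 2)} (path_edges p) = (False, False, True)"
      by (simp add: orientation_parity_def)
  qed
  show "all_cycles_odd {(Hub 1, Hub 2)}"
    unfolding all_cycles_odd_def cycle_in_def
  proof (intro allI impI, elim conjE)
    fix c :: "vtx list"
    assume c: "3 \<le> length c" "distinct c" "walk {(Hub 1, Hub 2)} (c @ [hd c])"
    then have "length c \<le> 2"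
      using short[of c] walk_appendD[of _ c "[hd c]"] by blast
    with c(1) show "orientation_parity {(Hub 1, Hub 2)} (cycle_edges c) = (True, False, False)"
      by simp
  qed
qed

lemma field_arcs_one: "Field (arcs 1) = {Hub 1, Hub 2, Hub 3, Hub 4}"
  by (auto simp: arcs_one Field_def)

lemma length_le_4_cases [consumes 2]:
  assumes "length xs \<le> 4" "xs \<noteq> []"
  obtains a where "xs = [a]" | a b where "xs = [a, b]" | a b c where "xs = [a, b, c]"
    | a b c d where "xs = [a, b, c, d]"
  using assms by (auto simp: le_Suc_eq numeral_eq_Suc length_Suc_conv)

lemma hub_paths_odd_arcs_one: "hub_paths_odd (arcs 1)"
  unfolding hub_paths_odd_def
proof (intro allI impI, elim conjE)
  fix p :: "vtx list"
  assume p: "distinct p" "walk (arcs 1) p" "p \<noteq> []" "hd p = Hub 1" "last p = Hub 2"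
  then have "2 \<le> length p"
    by (simp add: two_le_length_if_hd_ne_last)
  with p have "length p \<le> 4"
    using length_walk_le_card_Field[of "arcs 1" p, unfolded field_arcs_one] by simp
  from this p(3) p show "orientation_parity (arcs 1) (path_edges p) = (False, False, True)"
    by (cases p rule: length_le_4_cases) (auto simp: arcs_one adjacent_def orientation_parity_def)
qed

lemma closed_walk_arcs_one:
  assumes "distinct h" "h \<noteq> []" "walk (arcs 1) (x # h)" "last h = x"
  shows "orientation_parity (arcs 1) (path_edges (x # h)) = (True, False, False)"
proof -
  have "length h \<le> 4"
  proof (cases "2 \<le> length h")
    case True
    with assms show ?thesis
      using length_walk_le_card_Field[of "arcs 1" h, unfolded field_arcs_one]
        walk_appendD[of "arcs 1" "[x]" h]
      by simp
  qed simp
  from this assms(2) assms show ?thesis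
    by (cases h rule: length_le_4_cases) (auto simp: arcs_one adjacent_def orientation_parity_def)
qed

section \<open>Contracting hub-to-hub walks\<close>

lemma segment_parity:
  assumes "hub_paths_odd X" "i \<in> copies" "walk X q" "distinct q" "2 \<le> length q"
    and "is_hub (emb i (hd q))" "is_hub (emb i (last q))"
  shows "adjacent (arcs 1) (emb i (hd q)) (emb i (last q))"
    and "orientation_parity (glue X) (path_edges (map (emb i) q)) =
           orientation_parity (arcs 1) [(emb i (hd q), emb i (last q))]"
proof -
  have q: "q \<noteq> []" "hd q \<noteq> last q"
    using assms(4,5) distinct_hd_ne_last by auto
  with assms(6,7) consider "hd q = Hub 1" "last q = Hub 2" | "hd q = Hub 2" "last q = Hub 1"
    using is_hub_emb by metis
  then have "adjacent (arcs 1) (emb i (hd q)) (emb i (last q)) \<and>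
    orientation_parity X (path_edges q) = orientation_parity (arcs 1) [(emb i (hd q), emb i (last q))]"
  proof cases
    case 1
    with assms q have "orientation_parity X (path_edges q) = (False, False, True)"
      by (simp add: hub_paths_oddD)
    with 1 emb_hub_arc[OF assms(2)] show ?thesis
      by (simp only: adjacent_def orientation_parity_single_arc simp_thms)
  next
    case 2
    with assms q have "orientation_parity X (path_edges (rev q)) = (False, False, True)"
      by (simp add: hub_paths_oddD walk_rev hd_rev last_rev)
    then have "orientation_parity X (path_edges q) = (False, True, False)"
      by (simp add: orientation_parity_reverse split: prod.splits)
    with 2 emb_hub_arc[OF assms(2)] show ?thesis
      by (simp only: adjacent_def orientation_parity_single_arc simp_thms)
  qed
  moreover have "orientation_parity (glue X) (path_edges (map (emb i) q)) = orientation_parity X (path_edges q)"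
    using orientation_parity_path_map_emb[OF assms(2) path_edges_distinct[OF assms(4)]] .
  ultimately show "adjacent (arcs 1) (emb i (hd q)) (emb i (last q))"
    "orientation_parity (glue X) (path_edges (map (emb i) q)) =
       orientation_parity (arcs 1) [(emb i (hd q), emb i (last q))]"
    by simp_all
qed

lemma walk_in_copy_until_hub:
  assumes "walk (glue X) (emb i u # r)" "adjacent X u v" "r \<noteq> []" "hd r = emb i v" "is_hub (last r)"
  shows "\<exists>q t. walk X (u # q) \<and> q \<noteq> [] \<and> t \<noteq> [] \<and> r = map (emb i) q @ tl t \<and>
           emb i (last q) = hd t \<and> filter is_hub (map (emb i) q) = [hd t]"
  using assms
proof (induction r arbitrary: u v)
  case (Cons y r)
  then have y: "y = emb i v" by simp
  show ?case
  proof (cases "is_hub y")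
    case True
    with Cons.prems y show ?thesis
      by (intro exI[of _ "[v]"] exI[of _ "y # r"]) simp
  next
    case False
    with Cons.prems(5) have "r \<noteq> []" by auto
    then have "adjacent (glue X) y (hd r)" "walk (glue X) (y # r)"
      using Cons.prems(1) by (cases r; simp)+
    then obtain j u' v' where "adjacent X u' v'" "y = emb j u'" "hd r = emb j v'"
      by (auto elim: adjacent_glueE)
    moreover from this False y have "j = i" "u' = v"
      using emb_eq_non_hub by metis+
    ultimately obtain q t where "walk X (v # q)" "q \<noteq> []" "t \<noteq> []" "r = map (emb i) q @ tl t"
      "emb i (last q) = hd t" "filter is_hub (map (emb i) q) = [hd t]"
      using Cons.IH[of v v'] \<open>walk (glue X) (y # r)\<close> \<open>r \<noteq> []\<close> Cons.prems(5) y by auto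
    with Cons.prems(2) False y show ?thesis
      by (intro exI[of _ "v # q"] exI[of _ t]) simp
  qed
qed simp

lemma hub_walk_first_segment:
  assumes "walk (glue X) p" "2 \<le> length p" "is_hub (hd p)" "is_hub (last p)"
  obtains i q t where "i \<in> copies" "walk X q" "2 \<le> length q" "t \<noteq> []"
    "p = map (emb i) q @ tl t" "hd t = emb i (last q)"
    "filter is_hub (map (emb i) q) = [emb i (hd q), emb i (last q)]"
proof -
  obtain x r where p: "p = x # r" "r \<noteq> []"
    using assms(2) by (cases p rule: remdups_adj.cases) auto
  then have "adjacent (glue X) x (hd r)"
    using assms(1) by (cases r) auto
  then obtain i u v where i: "i \<in> copies" "adjacent X u v" "x = emb i u" "hd r = emb i v"
    by (rule adjacent_glueE)
  with assms p obtain q t where "walk X (u # q)" "q \<noteq> []" "t \<noteq> []" "r = map (emb i) q @ tl t"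
    "emb i (last q) = hd t" "filter is_hub (map (emb i) q) = [hd t]"
    using walk_in_copy_until_hub[of X i u r v] by auto
  moreover from this(2) have "2 \<le> length (u # q)"
    by (simp add: Suc_le_eq)
  ultimately show ?thesis
    by (intro that[of i "u # q" t]) (use i(1,3) assms(3) p in simp_all)
qed

text \<open>Filtering the hubs contracts every segment of p inside one copy to an arc of H_1.\<close>

definition hub_projection_parity :: "(vtx \<times> vtx) set \<Rightarrow> vtx list \<Rightarrow> bool" where
  "hub_projection_parity X p \<longleftrightarrow> walk (arcs 1) (filter is_hub p) \<and>
     orientation_parity (glue X) (path_edges p) = orientation_parity (arcs 1) (path_edges (filter is_hub p))"

lemma hub_projection_parity_prepend_segment:
  assumes "hub_paths_odd X" "i \<in> copies" "walk X q" "distinct q" "2 \<le> length q"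
    and "filter is_hub (map (emb i) q) = [emb i (hd q), emb i (last q)]"
    and "hub_projection_parity X t" "t \<noteq> []" "hd t = emb i (last q)"
  shows "hub_projection_parity X (map (emb i) q @ tl t)"
    and "filter is_hub (map (emb i) q @ tl t) = emb i (hd q) # filter is_hub t"
proof -
  define s where "s = map (emb i) q"
  have "\<forall>y \<in> set (filter is_hub s). is_hub y"
    by simp
  then have hubs: "is_hub (emb i (hd q))" "is_hub (emb i (last q))"
    using assms(6) by (simp_all add: s_def)
  with assms(8,9) have ft: "filter is_hub t = hd t # filter is_hub (tl t)"
    by (cases t) auto
  with assms(6,9) show fp: "filter is_hub (s @ tl t) = emb i (hd q) # filter is_hub t"
    by (simp add: s_def)
  from assms(5) have "q \<noteq> []" by auto
  with assms(9) have "s \<noteq> []" "last s = hd t"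
    by (simp_all add: s_def last_map)
  then have "path_edges (s @ tl t) = path_edges s @ path_edges t"
    using assms(8) path_edges_append_tl by blast
  moreover have "path_edges (emb i (hd q) # filter is_hub t) = [(emb i (hd q), hd t)] @ path_edges (filter is_hub t)"
    using ft by simp
  moreover note segment_parity[OF assms(1-5) hubs]
  ultimately show "hub_projection_parity X (s @ tl t)"
    using assms(7,9) unfolding hub_projection_parity_def fp
    by (simp add: ft s_def orientation_parity_append_cong)
qed

lemma hub_projection_parity_if_distinct:
  assumes "hub_paths_odd X"
  shows "distinct p \<Longrightarrow> walk (glue X) p \<Longrightarrow> p \<noteq> [] \<Longrightarrow> is_hub (hd p) \<Longrightarrow> is_hub (last p) \<Longrightarrow>
    hub_projection_parity X p"
proof (induction "length p" arbitrary: p rule: less_induct)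
  case less
  show ?case
  proof (cases "2 \<le> length p")
    case False
    with less.prems(3) obtain x where "p = [x]"
      by (cases p rule: remdups_adj.cases) auto
    with less.prems(4) show ?thesis
      by (simp add: hub_projection_parity_def orientation_parity_def)
  next
    case True
    then obtain i q t where seg: "i \<in> copies" "walk X q" "2 \<le> length q" "t \<noteq> []"
      "p = map (emb i) q @ tl t" "hd t = emb i (last q)"
      "filter is_hub (map (emb i) q) = [emb i (hd q), emb i (last q)]"
      using hub_walk_first_segment less.prems(2,4,5) by metis
    define s where "s = map (emb i) q"
    from seg(3) have "q \<noteq> []" by auto
    with seg(6) have s: "s \<noteq> []" "last s = hd t"
      by (simp_all add: s_def last_map)
    with less.prems(1) seg(4,5) have "distinct s" "distinct t"
      using distinct_append_tl[of s t] by (simp_all add: s_def)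
    moreover have "walk (glue X) t"
      using walk_append_tl[of s t "glue X"] less.prems(2) seg(4,5) s by (simp add: s_def)
    moreover have "is_hub (hd t)"
      using seg(6,7) by (metis filter_eq_Cons_iff)
    moreover have "last t = last p" "length t < length p"
      using seg(3-5) s by (auto simp: last_append_tl s_def)
    ultimately have "hub_projection_parity X t"
      using less.hyps less.prems(5) seg(4) by metis
    moreover have "distinct q"
      using \<open>distinct s\<close> by (simp add: s_def distinct_map)
    ultimately show ?thesis
      using hub_projection_parity_prepend_segment[OF assms seg(1,2) _ seg(3,7)] seg(4-6) by simp
  qed
qed

section \<open>The invariants survive gluing\<close>

lemma hub_paths_odd_glue:
  assumes "hub_paths_odd X"
  shows "hub_paths_odd (glue X)"
  unfolding hub_paths_odd_def
proof (intro allI impI, elim conjE)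
  fix p
  assume p: "distinct p" "walk (glue X) p" "p \<noteq> []" "hd p = Hub 1" "last p = Hub 2"
  then have proj: "hub_projection_parity X p"
    by (intro hub_projection_parity_if_distinct[OF assms]) simp_all
  have "filter is_hub p \<noteq> []" "hd (filter is_hub p) = Hub 1" "last (filter is_hub p) = Hub 2"
    using p(3-5) last_filter[of is_hub p] by (cases p; simp)+
  with p(1) proj have "orientation_parity (arcs 1) (path_edges (filter is_hub p)) = (False, False, True)"
    using hub_paths_odd_arcs_one by (simp add: hub_paths_oddD hub_projection_parity_def)
  with proj show "orientation_parity (glue X) (path_edges p) = (False, False, True)"
    by (simp add: hub_projection_parity_def)
qed

lemma cycle_in_copy_parity:
  assumes "all_cycles_odd X" "cycle_in (glue X) c" "i \<in> copies" "set c \<subseteq> range (emb i)"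
  shows "orientation_parity (glue X) (cycle_edges c) = (True, False, False)"
proof -
  obtain c' where c: "c = map (emb i) c'"
    using assms(4) ex_map_conv[of c "emb i"] by blast
  with assms(2) have c': "3 \<le> length c'" "distinct c'" "c' \<noteq> []"
    by (auto simp: cycle_in_def distinct_map)
  then have loop_free: "\<forall>(u, v) \<in> set (path_edges (c' @ [hd c'])). u \<noteq> v"
    by (intro path_edges_closed_distinct) simp_all
  have closed: "c @ [hd c] = map (emb i) (c' @ [hd c'])"
    using c c'(3) by (simp add: hd_map)
  with assms(2) have "walk X (c' @ [hd c'])"
    using walk_map_emb_iff[OF assms(3) loop_free] by (simp add: cycle_in_def)
  with c' assms(1) have "orientation_parity X (cycle_edges c') = (True, False, False)"
    by (simp add: all_cycles_odd_def cycle_in_def)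
  moreover have "cycle_edges c = path_edges (map (emb i) (c' @ [hd c']))"
    using closed c'(3) c by (simp add: cycle_edges_eq_path_edges)
  ultimately show ?thesis
    using orientation_parity_path_map_emb[OF assms(3) loop_free] c'(3)
    by (simp add: cycle_edges_eq_path_edges)
qed

lemma hub_free_walk_in_copy:
  "walk (glue X) p \<Longrightarrow> \<forall>x \<in> set p. \<not> is_hub x \<Longrightarrow> p \<noteq> [] \<Longrightarrow> hd p \<in> range (emb i) \<Longrightarrow>
     set p \<subseteq> range (emb i)"
proof (induction p rule: induct_list012)
  case (3 x y p)
  then obtain j u v where "x = emb j u" "y = emb j v"
    by (auto elim: adjacent_glueE)
  moreover obtain w where "x = emb i w" "\<not> is_hub (emb i w)"
    using "3.prems"(2,4) by auto
  ultimately have "y \<in> range (emb i)"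
    using emb_eq_non_hub[of j u i w] by simp
  with "3.IH"(2) "3.prems" show ?case
    by simp
qed simp_all

lemma cycle_in_copy_or_through_hub:
  assumes "cycle_in (glue X) c"
  shows "(\<exists>i \<in> copies. set c \<subseteq> range (emb i)) \<or> (\<exists>x \<in> set c. is_hub x)"
proof (rule disjCI)
  assume no_hub: "\<not> (\<exists>x \<in> set c. is_hub x)"
  from assms obtain x y r where c: "c = x # y # r"
    by (cases c rule: remdups_adj.cases) (auto simp: cycle_in_def)
  with assms have "adjacent (glue X) x y"
    by (simp add: cycle_in_def)
  then obtain i u v where "i \<in> copies" "x = emb i u" "y = emb i v"
    by (rule adjacent_glueE)
  moreover have "set (c @ [hd c]) \<subseteq> range (emb i)"
    using assms no_hub c \<open>x = emb i u\<close>
    by (intro hub_free_walk_in_copy[of X]) (auto simp: cycle_in_def)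
  ultimately show "\<exists>i \<in> copies. set c \<subseteq> range (emb i)"
    by auto
qed

lemma distinct_closing_rest:
  assumes "distinct (s @ m)" "2 \<le> length s"
  shows "distinct (last s # m @ [hd s])"
proof -
  from assms(2) have "s \<noteq> []"
    by auto
  then have "last s \<in> set s" "hd s \<in> set s"
    by simp_all
  with assms show ?thesis
    using distinct_hd_ne_last[of s] by (auto simp: disjoint_iff)
qed

lemma cycle_through_hub_first_segment:
  assumes "cycle_in (glue X) c" "is_hub (hd c)" "\<forall>i \<in> copies. \<not> set c \<subseteq> range (emb i)"
  obtains i q t where "i \<in> copies" "walk X q" "distinct q" "2 \<le> length q"
    "filter is_hub (map (emb i) q) = [emb i (hd q), emb i (last q)]" "emb i (hd q) = hd c"
    "c @ [hd c] = map (emb i) q @ tl t" "t \<noteq> []" "hd t = emb i (last q)"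
    "distinct t" "walk (glue X) t" "last t = hd c"
proof -
  from assms(1) have c: "distinct c" "c \<noteq> []" "walk (glue X) (c @ [hd c])" "2 \<le> length (c @ [hd c])"
    by (auto simp: cycle_in_def)
  with assms(2) obtain i q t where seg: "i \<in> copies" "walk X q" "2 \<le> length q" "t \<noteq> []"
    "c @ [hd c] = map (emb i) q @ tl t" "hd t = emb i (last q)"
    "filter is_hub (map (emb i) q) = [emb i (hd q), emb i (last q)]"
    using hub_walk_first_segment[of X "c @ [hd c]"] by auto
  define s where "s = map (emb i) q"
  from seg(3) have "q \<noteq> []" by auto
  with seg(5,6) c(2) have s: "s \<noteq> []" "hd s = hd c" "last s = hd t"
    by (auto simp: s_def last_map hd_append dest: arg_cong[of _ _ hd])
  have "tl t \<noteq> []"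
  proof
    assume "tl t = []"
    with seg(5) have "c @ [hd c] = s"
      by (simp add: s_def)
    then have "set c \<subseteq> set s"
      by (metis Un_upper1 set_append)
    with assms(3) seg(1) show False
      by (auto simp: s_def)
  qed
  then obtain m where m: "tl t = m @ [hd c]"
    using seg(5) by (metis append_butlast_last_id last_appendR last_snoc)
  with seg(5) have "c = s @ m"
    by (simp add: s_def)
  with c(1) seg(3) s have "distinct s" "distinct t"
    using distinct_closing_rest[of s m] seg(4) m by (cases t; simp add: s_def)+
  moreover have "walk (glue X) t"
    using walk_append_tl[of s t "glue X"] c(3) seg(4,5) s by (simp add: s_def)
  moreover have "last t = hd c"
    using seg(4) m by (cases t) auto
  ultimately show ?thesis
    using that[of i q t] seg s \<open>q \<noteq> []\<close> by (simp add: s_def distinct_map hd_map)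
qed

lemma cycle_through_hub_parity:
  assumes "hub_paths_odd X" "cycle_in (glue X) c" "is_hub (hd c)"
    and "\<forall>i \<in> copies. \<not> set c \<subseteq> range (emb i)"
  shows "orientation_parity (glue X) (cycle_edges c) = (True, False, False)"
proof -
  obtain i q t where seg: "i \<in> copies" "walk X q" "distinct q" "2 \<le> length q"
    "filter is_hub (map (emb i) q) = [emb i (hd q), emb i (last q)]" "emb i (hd q) = hd c"
    "c @ [hd c] = map (emb i) q @ tl t" "t \<noteq> []" "hd t = emb i (last q)"
    "distinct t" "walk (glue X) t" "last t = hd c"
    using cycle_through_hub_first_segment[OF assms(2-4)] by blast
  have "is_hub (hd t)"
    using seg(5,9) by (metis filter_eq_Cons_iff)
  with seg(8,10-12) assms(3) have "hub_projection_parity X t"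
    by (intro hub_projection_parity_if_distinct[OF assms(1)]) simp_all
  note closed = hub_projection_parity_prepend_segment[OF assms(1) seg(1-5) this seg(8,9), folded seg(7), unfolded seg(6)]
  define h where "h = filter is_hub t"
  have "orientation_parity (arcs 1) (path_edges (hd c # h)) = (True, False, False)"
  proof (rule closed_walk_arcs_one)
    show "distinct h" "h \<noteq> []"
      using seg(8,10) \<open>is_hub (hd t)\<close> by (cases t; simp add: h_def)+
    show "walk (arcs 1) (hd c # h)"
      using closed by (simp add: hub_projection_parity_def h_def)
    show "last h = hd c"
      using seg(8,12) assms(3) last_filter[of is_hub t] by (simp add: h_def)
  qed
  moreover have "c \<noteq> []"
    using assms(2) by (auto simp: cycle_in_def)
  ultimately show ?thesis
    using closed by (simp add: hub_projection_parity_def h_def cycle_edges_eq_path_edges)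
qed

lemma all_cycles_odd_glue:
  assumes "hub_paths_odd X" "all_cycles_odd X"
  shows "all_cycles_odd (glue X)"
  unfolding all_cycles_odd_def
proof (intro allI impI)
  fix c
  assume c: "cycle_in (glue X) c"
  show "orientation_parity (glue X) (cycle_edges c) = (True, False, False)"
  proof (cases "\<exists>i \<in> copies. set c \<subseteq> range (emb i)")
    case True
    then show ?thesis
      using cycle_in_copy_parity[OF assms(2) c] by blast
  next
    case False
    with c obtain k where k: "k < length c" "is_hub (c ! k)"
      using cycle_in_copy_or_through_hub by (metis in_set_conv_nth)
    then have "hd (rotate k c) = c ! k"
      using hd_rotate_conv_nth[of c k] by (cases c) simp_all
    with False k c have "orientation_parity (glue X) (cycle_edges (rotate k c)) = (True, False, False)"
      using cycle_through_hub_parity[OF assms(1) cycle_in_rotate[OF c]] by simp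
    then show ?thesis
      by (simp add: cycle_edges_rotate orientation_parity_rotate)
  qed
qed

lemma invariants_glue_power:
  "hub_paths_odd ((glue ^^ n) {(Hub 1, Hub 2)}) \<and> all_cycles_odd ((glue ^^ n) {(Hub 1, Hub 2)})"
proof (induction n)
  case 0
  show ?case
    using invariants_single_arc by simp
next
  case (Suc n)
  then show ?case
    by (simp add: hub_paths_odd_glue all_cycles_odd_glue)
qed

lemma orientation_parity_cycle_edges_arcs:
  "orientation_parity (arcs g) (cycle_edges c) = (even (length c), even (fwd_count g c), even (bwd_count g c))"
proof -
  have "length (cycle_edges c) = length c"
    by (simp add: cycle_edges_def)
  moreover have "{i. i < length c \<and> cycle_edges c ! i \<in> arcs g} =
      {i. i < length c \<and> (c ! i, c ! ((i + 1) mod length c)) \<in> arcs g}"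
    "{i. i < length c \<and> prod.swap (cycle_edges c ! i) \<in> arcs g} =
      {i. i < length c \<and> (c ! ((i + 1) mod length c), c ! i) \<in> arcs g}"
    by (auto simp: nth_cycle_edges)
  ultimately show ?thesis
    by (simp add: orientation_parity_def length_filter_conv_card fwd_count_def bwd_count_def)
qed

lemma cycle_in_arcs_if_is_cycle: "is_cycle g c \<Longrightarrow> cycle_in (arcs g) c"
proof -
  assume c: "is_cycle g c"
  then have "c \<noteq> []" by (auto simp: is_cycle_def)
  moreover have "adjacent (arcs g) u v" if "(u, v) \<in> set (cycle_edges c)" for u v
  proof -
    from that obtain i where "i < length c" "(u, v) = cycle_edges c ! i"
      by (auto simp: in_set_conv_nth cycle_edges_def)
    with c show ?thesis
      by (auto simp: nth_cycle_edges is_cycle_def adj_def adjacent_def)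
  qed
  ultimately show ?thesis
    using c by (auto simp: cycle_in_def is_cycle_def walk_closed_iff)
qed

theorem theorem3:
  fixes g :: nat
  assumes "g \<ge> 1"
  shows "pfaffian g"
  unfolding pfaffian_def
proof (intro allI impI)
  fix c
  assume "nice_cycle g c"
  then have "cycle_in (arcs g) c"
    by (simp add: nice_cycle_def cycle_in_arcs_if_is_cycle)
  moreover have "all_cycles_odd (arcs g)"
    using invariants_glue_power arcs_eq_glue_power[OF assms] by simp
  ultimately have "orientation_parity (arcs g) (cycle_edges c) = (True, False, False)"
    by (simp add: all_cycles_odd_def)
  then show "oddly_oriented g c"
    by (simp add: oddly_oriented_def orientation_parity_cycle_edges_arcs)
qed

end
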